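(* For every integer $n\ge 3$ and every $x>0$, $$\frac{n-2}{n-1}<\frac{\bigl(\psi_2^{(n)}(x)\bigr)^2}{\psi_2^{(n-1)}(x)\,\psi_2^{(n+1)}(x)}<\frac{n}{n+1}.$$ Both bounds are sharp: the lower constant $\frac{n-2}{n-1}$ cannot be replaced by any larger constant and the upper constant $\frac{n}{n+1}$ cannot be replaced by any smaller constant, uniformly in $x>0$.
   Context: For an integer $n\ge 2$ and $x>0$, the poly-double gamma function is defined by $$\psi_2^{(n)}(x)=(-1)^{n+1}\,n!\sum_{k=0}^{\infty}\frac{1+k}{(x+k)^{n+1}} .$$ *)

theory Defs
  imports "HOL-Analysis.Analysis"
begin

definition psi2 :: "nat \<Rightarrow> real \<Rightarrow> real" where
  "psi2 n x = (-1) ^ (n + 1) * fact n * (\<Sum>k. (1 + real k) / (x + real k) ^ (n + 1))"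

end

theory Submission
  imports Defs "HOL-Probability.Distributions"
begin

text \<open>
  Write \<open>S\<^sub>p(x) = \<Sum>\<^sub>k (k + 1) / (x + k)\<^sup>p\<close>. Then \<open>\<psi>\<^sub>2\<^sup>(\<^sup>n\<^sup>)\<close> is \<open>\<plusminus>n! S\<^sub>n\<^sub>+\<^sub>1\<close>, and the ratio
  equals \<open>n/(n+1) \<cdot> S\<^sub>n\<^sub>+\<^sub>1\<^sup>2 / (S\<^sub>n S\<^sub>n\<^sub>+\<^sub>2)\<close>. The upper bound is the strict Cauchy-Schwarz
  inequality \<open>S\<^sub>n\<^sub>+\<^sub>1\<^sup>2 < S\<^sub>n S\<^sub>n\<^sub>+\<^sub>2\<close>.

  For the lower bound use the Laplace representation \<open>(p-1)! S\<^sub>p(x) = \<integral>\<^sub>0\<^sup>\<infinity> t\<^sup>p\<^sup>-\<^sup>1 w(t) dt\<close> with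
  \<open>w(t) = e\<^sup>-\<^sup>x\<^sup>t / (1 - e\<^sup>-\<^sup>t)\<^sup>2\<close>. The function \<open>t\<^sup>2 w(t)\<close> is log-concave, i.e. \<open>\<phi> = -(log (t\<^sup>2 w))'\<close>
  is increasing, and integration by parts gives \<open>\<integral> t\<^sup>j\<^sup>+\<^sup>1 w \<phi> = (j - 1) \<integral> t\<^sup>j w\<close>. Integrating
  \<open>(t - \<tau>) (\<phi>(t) - \<phi>(\<tau>)) t\<^sup>j w(t) > 0\<close> with \<open>\<tau>\<close> the ratio of consecutive moments (Chebyshev's
  trick) yields \<open>(n-2)(n+1) S\<^sub>n S\<^sub>n\<^sub>+\<^sub>2 < n(n-1) S\<^sub>n\<^sub>+\<^sub>1\<^sup>2\<close>.

  Both bounds are attained in the limit: as \<open>x \<rightarrow> 0\<close> the term \<open>k = 0\<close> dominates, so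
  \<open>x\<^sup>p S\<^sub>p(x) \<rightarrow> 1\<close> and the ratio tends to \<open>n/(n+1)\<close>; as \<open>x \<rightarrow> \<infinity>\<close> the estimate
  \<open>1 \<le> t\<^sup>2/(1 - e\<^sup>-\<^sup>t)\<^sup>2 \<le> (1 + t)\<^sup>2\<close> gives \<open>x\<^sup>p\<^sup>-\<^sup>2 S\<^sub>p(x) \<rightarrow> 1/((p-1)(p-2))\<close> and the ratio tends
  to \<open>(n-2)/(n-1)\<close>.
\<close>

section \<open>Exponential inequalities and power series\<close>

lemma two_mult_less_exp_minus_exp_neg:
  fixes u :: real
  assumes u: "0 < u"
  shows "2 * u < exp u - exp (- u)"
proof -
  let ?f = "\<lambda>v::real. exp v - exp (- v) - 2 * v"
  have "?f 0 < ?f u"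
  proof (rule DERIV_pos_imp_increasing_open[OF u])
    fix v :: real assume v: "0 < v" "v < u"
    then have "exp v \<noteq> 1" by simp
    then have "0 < (exp v - 1)\<^sup>2 / exp v" by simp
    also have "(exp v - 1)\<^sup>2 / exp v = exp v + exp (- v) - 2"
      by (simp add: power2_eq_square field_simps exp_minus)
    finally show "\<exists>y. DERIV ?f v :> y \<and> 0 < y"
      by (intro exI[of _ "exp v + exp (- v) - 2"]) (auto intro!: derivative_eq_intros)
  qed (intro continuous_intros)
  then show ?thesis by simp
qed

lemma sq_mult_exp_less_sq_exp_minus_1:
  fixes t :: real
  assumes t: "0 < t"
  shows "t\<^sup>2 * exp t < (exp t - 1)\<^sup>2"
proof -
  have "exp t - 1 = exp (t / 2) * (exp (t / 2) - exp (- (t / 2)))"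
    by (simp add: algebra_simps flip: exp_add)
  moreover have "t\<^sup>2 * exp t = (exp (t / 2) * t)\<^sup>2"
    by (simp add: power_mult_distrib power2_eq_square flip: exp_add)
  moreover have "exp (t / 2) * t < exp (t / 2) * (exp (t / 2) - exp (- (t / 2)))"
    using two_mult_less_exp_minus_exp_neg[of "t / 2"] t by simp
  ultimately show ?thesis
    using t by (simp add: power_strict_mono)
qed

lemma sq_div_one_minus_exp_neg_bounds:
  fixes t :: real
  assumes t: "0 < t"
  shows "1 \<le> (t / (1 - exp (- t)))\<^sup>2" and "(t / (1 - exp (- t)))\<^sup>2 \<le> (1 + t)\<^sup>2"
proof -
  have pos: "0 < 1 - exp (- t)" using t by simp
  have "1 - exp (- t) \<le> t" using exp_ge_add_one_self[of "- t"] by simp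
  then have "1 \<le> t / (1 - exp (- t))" using pos by simp
  then show "1 \<le> (t / (1 - exp (- t)))\<^sup>2" by (simp add: one_le_power)
  have "(1 + t) * exp (- t) \<le> exp t * exp (- t)"
    using exp_ge_add_one_self[of t] by (intro mult_right_mono) (auto simp: add.commute)
  then have "t \<le> (1 + t) * (1 - exp (- t))" by (simp add: algebra_simps flip: exp_add)
  then have "t / (1 - exp (- t)) \<le> 1 + t" using pos by (simp add: divide_le_eq)
  then show "(t / (1 - exp (- t)))\<^sup>2 \<le> (1 + t)\<^sup>2"
    using pos t by (intro power_mono) auto
qed

lemma exp_neg_shift: "exp (- ((x + real k) * t)) = exp (- (x * t)) * exp (- t) ^ k"
  by (simp add: exp_of_nat_mult[symmetric] exp_add[symmetric] algebra_simps)

lemma geometric_second_deriv_sums: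
  fixes q :: real
  assumes q: "\<bar>q\<bar> < 1"
  shows "(\<lambda>k. (1 + real k) * (2 + real k) * q ^ k) sums (2 / (1 - q) ^ 3)"
proof -
  have "(\<lambda>k. diffs (\<lambda>k. of_nat (Suc k)) k * q ^ k) sums (2 / (1 - q) ^ 3)"
  proof (rule termdiffs_sums_strong[where K=1])
    fix z :: real assume "norm z < 1"
    then show "(\<lambda>k. of_nat (Suc k) * z ^ k) sums (1 / (1 - z)\<^sup>2)" by (rule geometric_deriv_sums)
  next
    have "1 - q \<noteq> 0" using q by auto
    then show "((\<lambda>z. 1 / (1 - z)\<^sup>2) has_field_derivative (2 / (1 - q) ^ 3)) (at q)"
      by (auto intro!: derivative_eq_intros simp: divide_simps power_eq_if)
  qed (use q in auto)
  then show ?thesis unfolding diffs_def by (simp add: algebra_simps)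
qed

lemma ratio_power_rescale:
  fixes x u v w :: real
  assumes x: "x \<noteq> 0" and abc: "2 * b = a + c"
  shows "(x ^ b * u)\<^sup>2 / ((x ^ a * v) * (x ^ c * w)) = u\<^sup>2 / (v * w)"
proof -
  have "(x ^ b)\<^sup>2 = x ^ (2 * b)"
    by (simp add: power_mult[symmetric] mult.commute)
  also have "\<dots> = x ^ a * x ^ c"
    by (simp add: abc power_add)
  finally have "(x ^ b)\<^sup>2 = x ^ a * x ^ c" .
  then show ?thesis
    using x by (simp add: power_mult_distrib mult_ac)
qed

section \<open>Laplace transforms on the half-line\<close>

definition gamma_kernel :: "real \<Rightarrow> nat \<Rightarrow> real \<Rightarrow> real" where
  "gamma_kernel a j t = (if 0 < t then t ^ j * exp (- (a * t)) else 0)"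

lemma gamma_kernel_nonneg: "0 \<le> gamma_kernel a j t"
  by (simp add: gamma_kernel_def)

lemma gamma_kernel_measurable [measurable]: "gamma_kernel a j \<in> borel_measurable borel"
  unfolding gamma_kernel_def by measurable

lemma has_bochner_integral_gamma_kernel:
  assumes a: "0 < a"
  shows "has_bochner_integral lborel (gamma_kernel a j) (fact j / a ^ (j + 1))"
proof (rule has_bochner_integral_nn_integral)
  show "gamma_kernel a j \<in> borel_measurable lborel" by simp
  show "AE t in lborel. 0 \<le> gamma_kernel a j t" by (simp add: gamma_kernel_nonneg)
  show "0 \<le> fact j / a ^ (j + 1)" using a by simp
  have "(\<integral>\<^sup>+ t. ennreal (gamma_kernel a j t) \<partial>lborel) =
        (\<integral>\<^sup>+ t. ennreal (1 / a) * ennreal (erlang_density 0 a t * t ^ j) \<partial>lborel)"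
  proof (intro nn_integral_cong_AE eventually_mono[OF AE_lborel_singleton[of 0]])
    fix t :: real assume "t \<noteq> 0"
    then show "ennreal (gamma_kernel a j t) = ennreal (1 / a) * ennreal (erlang_density 0 a t * t ^ j)"
      using a by (auto simp: gamma_kernel_def erlang_density_def ennreal_mult'[symmetric] field_simps)
  qed
  also have "\<dots> = ennreal (1 / a) * (\<integral>\<^sup>+ t. ennreal (erlang_density 0 a t * t ^ j) \<partial>lborel)"
    by (intro nn_integral_cmult) auto
  also have "\<dots> = ennreal (1 / a) * ennreal (fact j / a ^ j)"
    using nn_integral_erlang_ith_moment[OF a, of 0 j] by simp
  also have "\<dots> = ennreal (fact j / a ^ (j + 1))"
    using a by (simp add: ennreal_mult'[symmetric] field_simps)
  finally show "(\<integral>\<^sup>+ t. ennreal (gamma_kernel a j t) \<partial>lborel) = ennreal (fact j / a ^ (j + 1))" .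
qed

lemma has_bochner_integral_laplace_series:
  fixes c a :: "nat \<Rightarrow> real"
  assumes c: "\<And>k. 0 \<le> c k" and a: "\<And>k. 0 < a k"
    and f: "\<And>t. 0 < t \<Longrightarrow> (\<lambda>k. c k * exp (- (a k * t))) sums f t"
    and I: "(\<lambda>k. c k * (fact j / a k ^ (j + 1))) sums I"
  shows "has_bochner_integral lborel (\<lambda>t. if 0 < t then t ^ j * f t else 0) I"
proof -
  have "has_bochner_integral lborel (\<lambda>t. c k * gamma_kernel (a k) j t) (c k * (fact j / a k ^ (j + 1)))"
    for k by (intro has_bochner_integral_mult_right has_bochner_integral_gamma_kernel a)
  then have int: "integrable lborel (\<lambda>t. c k * gamma_kernel (a k) j t)"
    and int_eq: "integral\<^sup>L lborel (\<lambda>t. c k * gamma_kernel (a k) j t) = c k * (fact j / a k ^ (j + 1))"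
    for k by (auto simp: has_bochner_integral_iff)
  have norm_eq: "norm (c k * gamma_kernel (a k) j t) = c k * gamma_kernel (a k) j t" for k t
    using c by (simp add: gamma_kernel_nonneg)
  have pointwise: "(\<lambda>k. c k * gamma_kernel (a k) j t) sums (if 0 < t then t ^ j * f t else 0)" for t
  proof (cases "0 < t")
    case True
    then show ?thesis
      using sums_mult[OF f[OF True], of "t ^ j"] by (simp add: gamma_kernel_def mult_ac)
  qed (simp add: gamma_kernel_def)
  have "AE t in lborel. summable (\<lambda>k. norm (c k * gamma_kernel (a k) j t))"
    unfolding norm_eq using pointwise by (auto simp: sums_iff)
  moreover have "summable (\<lambda>k. \<integral>t. norm (c k * gamma_kernel (a k) j t) \<partial>lborel)"
    unfolding norm_eq int_eq using I by (simp add: sums_iff)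
  ultimately have "integrable lborel (\<lambda>t. \<Sum>k. c k * gamma_kernel (a k) j t)"
    and "integral\<^sup>L lborel (\<lambda>t. \<Sum>k. c k * gamma_kernel (a k) j t) = I"
    using integrable_suminf[OF int] integral_suminf[OF int] I
    by (auto simp: sums_iff has_bochner_integral_integral_eq[OF has_bochner_integral_gamma_kernel[OF a]])
  moreover have "(\<lambda>t. \<Sum>k. c k * gamma_kernel (a k) j t) = (\<lambda>t. if 0 < t then t ^ j * f t else 0)"
    using pointwise by (simp add: sums_iff)
  ultimately show ?thesis by (simp add: has_bochner_integral_iff)
qed

lemma has_bochner_integral_mono:
  fixes f g :: "'a \<Rightarrow> real"
  assumes "has_bochner_integral M f I" "has_bochner_integral M g J" "\<And>x. f x \<le> g x"
  shows "I \<le> J"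
  using assms Bochner_Integration.integral_mono[of M f g] by (auto simp: has_bochner_integral_iff)

lemma has_bochner_integral_lborel_pos:
  fixes f :: "real \<Rightarrow> real"
  assumes f: "has_bochner_integral lborel f I"
    and nonneg: "\<And>t. 0 \<le> f t" and pos: "\<And>t. 0 < t \<Longrightarrow> t \<noteq> a \<Longrightarrow> 0 < f t"
  shows "0 < I"
proof -
  have int: "integrable lborel f" and I: "integral\<^sup>L lborel f = I"
    using f by (auto simp: has_bochner_integral_iff)
  have "I \<noteq> 0"
  proof
    assume "I = 0"
    then have "AE t in lborel. f t = 0"
      using integral_nonneg_eq_0_iff_AE[OF int] nonneg I by simp
    then have "AE t in lborel. t \<notin> {0<..<1::real}"
      using AE_lborel_singleton[of a] by eventually_elim (use pos in fastforce)
    moreover have "(AE t in lborel. t \<notin> {0<..<1::real}) \<longleftrightarrow> emeasure lborel {0<..<1::real} = 0"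
      by (rule AE_iff_measurable) auto
    ultimately show False by simp
  qed
  moreover have "0 \<le> I"
    unfolding I[symmetric] using nonneg by (simp add: integral_nonneg_AE)
  ultimately show ?thesis by simp
qed

section \<open>The double zeta function\<close>

text \<open>\<open>\<Sum>\<^sub>k (k + 1) / (x + k)\<^sup>p = \<Sum>\<^sub>a\<^sub>,\<^sub>b\<^sub>\<ge>\<^sub>0 1 / (x + a + b)\<^sup>p\<close> is Barnes' double zeta function
  with unit periods.\<close>

definition double_zeta :: "nat \<Rightarrow> real \<Rightarrow> real" where
  "double_zeta p x = (\<Sum>k. (1 + real k) / (x + real k) ^ p)"

lemma summable_double_zeta:
  assumes x: "0 < x" and p: "3 \<le> p"
  shows "summable (\<lambda>k. (1 + real k) / (x + real k) ^ p)"
proof (rule summable_comparison_test'[where N=1])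
  show "summable (\<lambda>k. 2 * inverse (real k ^ 2))"
    by (intro summable_mult inverse_power_summable) auto
  fix k :: nat assume k: "1 \<le> k"
  have "real k ^ 3 \<le> real k ^ p" using k p by (intro power_increasing) auto
  also have "real k ^ p \<le> (x + real k) ^ p" using x by (intro power_mono) auto
  finally have "real k * real k ^ 2 \<le> (x + real k) ^ p" by (simp add: power_eq_if)
  then have "(1 + real k) / (x + real k) ^ p \<le> (2 * real k) / (real k * real k ^ 2)"
    using k by (intro frac_le) auto
  also have "\<dots> = 2 * inverse (real k ^ 2)" using k by (simp add: field_simps)
  finally show "norm ((1 + real k) / (x + real k) ^ p) \<le> 2 * inverse (real k ^ 2)"
    using x by simp
qed

lemma sums_double_zeta:
  "0 < x \<Longrightarrow> 3 \<le> p \<Longrightarrow> (\<lambda>k. (1 + real k) / (x + real k) ^ p) sums double_zeta p x"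
  unfolding double_zeta_def by (intro summable_sums summable_double_zeta)

lemma double_zeta_pos: "0 < x \<Longrightarrow> 3 \<le> p \<Longrightarrow> 0 < double_zeta p x"
  unfolding double_zeta_def by (rule suminf_pos2[where i=0, OF summable_double_zeta]) auto

lemma double_zeta_sq_less:
  assumes x: "0 < x" and p: "3 \<le> p"
  shows "(double_zeta (p + 1) x)\<^sup>2 < double_zeta p x * double_zeta (p + 2) x"
proof -
  define a where "a q k = (1 + real k) / (x + real k) ^ q" for q k
  define \<tau> where "\<tau> = double_zeta (p + 1) x / double_zeta p x"
  have pos: "0 < double_zeta p x" by (rule double_zeta_pos[OF x p])
  have square: "a (p + 2) k - 2 * \<tau> * a (p + 1) k + \<tau>\<^sup>2 * a p k = a p k * (1 / (x + real k) - \<tau>)\<^sup>2"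
    for k
  proof -
    have "y \<noteq> 0 \<Longrightarrow> c / y ^ (p + 2) - 2 * \<tau> * (c / y ^ (p + 1)) + \<tau>\<^sup>2 * (c / y ^ p)
            = c / y ^ p * (1 / y - \<tau>)\<^sup>2" for y c :: real
      by (simp add: power_add field_simps power2_eq_square)
    moreover have "x + real k \<noteq> 0" using x by simp
    ultimately show ?thesis by (simp add: a_def)
  qed
  have "(\<lambda>k. a p k * (1 / (x + real k) - \<tau>)\<^sup>2) sums
        (double_zeta (p + 2) x - 2 * \<tau> * double_zeta (p + 1) x + \<tau>\<^sup>2 * double_zeta p x)"
    unfolding square[symmetric] using p
    by (unfold a_def, intro sums_add sums_diff sums_mult sums_double_zeta x) auto
  moreover have "0 < (\<Sum>k. a p k * (1 / (x + real k) - \<tau>)\<^sup>2)"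
  proof -
    have "1 / (x + 1) \<noteq> 1 / x" using x by (simp add: field_simps)
    then obtain i :: nat where "1 / (x + real i) \<noteq> \<tau>"
      by (metis add_0_right of_nat_0 of_nat_1)
    then have "0 < a p i * (1 / (x + real i) - \<tau>)\<^sup>2"
      using x by (simp add: a_def add_pos_nonneg)
    then show ?thesis
      using calculation x by (intro suminf_pos2) (auto simp: sums_iff a_def)
  qed
  ultimately have "0 < double_zeta (p + 2) x - 2 * \<tau> * double_zeta (p + 1) x + \<tau>\<^sup>2 * double_zeta p x"
    by (simp add: sums_iff)
  then show ?thesis using pos by (simp add: \<tau>_def field_simps power2_eq_square)
qed

lemma double_zeta_split_head:
  assumes x: "0 < x" and p: "3 \<le> p"
  shows "double_zeta p x = 1 / x ^ p + (\<Sum>k. (2 + real k) / (x + 1 + real k) ^ p)"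
  using suminf_split_head[OF summable_double_zeta[OF x p]]
  by (simp add: double_zeta_def add_ac)

lemma double_zeta_at_right_0:
  assumes p: "3 \<le> p"
  shows "((\<lambda>x. x ^ p * double_zeta p x) \<longlongrightarrow> 1) (at_right 0)"
proof -
  define C where "C = 2 * double_zeta p 1"
  define T where "T x = (\<Sum>k. (2 + real k) / (x + 1 + real k) ^ p)" for x
  have T_bounds: "0 \<le> T x \<and> T x \<le> C" if x: "0 < x" for x
  proof -
    have "summable (\<lambda>k. (2 + real k) / (x + 1 + real k) ^ p)"
      using summable_double_zeta[OF x p] by (subst (asm) summable_Suc_iff[symmetric]) (simp add: add_ac)
    moreover have "(2 + real k) / (x + 1 + real k) ^ p \<le> 2 * ((1 + real k) / (1 + real k) ^ p)" for k
    proof -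
      have "(2 + real k) / (x + 1 + real k) ^ p \<le> (2 * (1 + real k)) / (1 + real k) ^ p"
        using x by (intro frac_le power_mono) auto
      then show ?thesis by simp
    qed
    moreover have "(\<lambda>k. 2 * ((1 + real k) / (1 + real k) ^ p)) sums C"
      unfolding C_def using sums_double_zeta[of 1 p] p by (intro sums_mult) simp
    ultimately show ?thesis
      unfolding T_def using x by (intro conjI suminf_nonneg sums_le[OF _ summable_sums]) auto
  qed
  have bounds: "eventually (\<lambda>x. 1 \<le> x ^ p * double_zeta p x \<and> x ^ p * double_zeta p x \<le> 1 + x ^ p * C)
                  (at_right 0)"
  proof (rule eventually_at_rightI[of 0 1])
    fix x :: real assume "x \<in> {0<..<1}"
    then have x: "0 < x" by simp
    have "x ^ p * double_zeta p x = 1 + x ^ p * T x"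
      using x by (simp add: double_zeta_split_head[OF x p] T_def distrib_left)
    then show "1 \<le> x ^ p * double_zeta p x \<and> x ^ p * double_zeta p x \<le> 1 + x ^ p * C"
      using T_bounds[OF x] x by (simp add: mult_left_mono)
  qed simp
  have "((\<lambda>x. 1 + x ^ p * C) \<longlongrightarrow> 1 + 0 ^ p * C) (at_right 0)"
    by (intro tendsto_intros)
  then have upper: "((\<lambda>x. 1 + x ^ p * C) \<longlongrightarrow> 1) (at_right 0)"
    using p by (simp add: power_0_left)
  show ?thesis
    by (rule tendsto_sandwich[OF eventually_mono[OF bounds] eventually_mono[OF bounds] tendsto_const upper])
      simp_all
qed

section \<open>Laplace representation and log-concavity\<close>

definition double_zeta_weight :: "real \<Rightarrow> real \<Rightarrow> real" where
  "double_zeta_weight x t = (if 0 < t then exp (- (x * t)) / (1 - exp (- t))\<^sup>2 else 0)"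

text \<open>The negative logarithmic derivative of \<open>t\<^sup>2 * double_zeta_weight x t\<close>.\<close>
definition double_zeta_logderiv :: "real \<Rightarrow> real \<Rightarrow> real" where
  "double_zeta_logderiv x t = x - 2 / t + 2 / (exp t - 1)"

lemma double_zeta_weight_sums:
  assumes t: "0 < t"
  shows "(\<lambda>k. (1 + real k) * exp (- ((x + real k) * t))) sums double_zeta_weight x t"
proof -
  have "(\<lambda>k. exp (- (x * t)) * (of_nat (Suc k) * exp (- t) ^ k)) sums
          (exp (- (x * t)) * (1 / (1 - exp (- t))\<^sup>2))"
    using t by (intro sums_mult geometric_deriv_sums) simp
  then show ?thesis
    unfolding exp_neg_shift using t by (simp add: double_zeta_weight_def algebra_simps)
qed

lemma double_zeta_weight_deriv_sums:
  assumes t: "0 < t"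
  shows "(\<lambda>k. (1 + real k) * (x + real k) * exp (- ((x + real k) * t))) sums
           (double_zeta_weight x t * (double_zeta_logderiv x t + 2 / t))"
proof -
  define q where "q = exp (- t)"
  have q: "\<bar>q\<bar> < 1" "1 - q \<noteq> 0" using t by (auto simp: q_def)
  have "(\<lambda>k. exp (- (x * t)) * ((1 + real k) * (2 + real k) * q ^ k + (x - 2) * ((1 + real k) * q ^ k)))
          sums (exp (- (x * t)) * (2 / (1 - q) ^ 3 + (x - 2) * (1 / (1 - q)\<^sup>2)))"
    using geometric_deriv_sums[of q] q
    by (intro sums_mult sums_add geometric_second_deriv_sums) (auto simp: add.commute)
  moreover have "2 / (1 - q) ^ 3 + (x - 2) * (1 / (1 - q)\<^sup>2) = (x + 2 / (exp t - 1)) / (1 - q)\<^sup>2"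
  proof -
    have "2 / (1 - q) - 2 = 2 / (exp t - 1)"
      using q t by (simp add: q_def exp_minus field_simps)
    moreover have "2 / u ^ 3 + (x - 2) * (1 / u\<^sup>2) = (2 / u + x - 2) / u\<^sup>2" if "u \<noteq> 0" for u
      using that by (simp add: field_simps power_eq_if)
    ultimately show ?thesis using q by simp
  qed
  moreover have "(\<lambda>k. (1 + real k) * (x + real k) * exp (- ((x + real k) * t))) =
      (\<lambda>k. exp (- (x * t)) * ((1 + real k) * (2 + real k) * q ^ k + (x - 2) * ((1 + real k) * q ^ k)))"
    unfolding exp_neg_shift q_def by (simp add: fun_eq_iff algebra_simps)
  moreover have "double_zeta_logderiv x t + 2 / t = x + 2 / (exp t - 1)"
    by (simp add: double_zeta_logderiv_def)
  ultimately show ?thesis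
    using t by (simp add: double_zeta_weight_def q_def)
qed

lemma has_bochner_integral_double_zeta_moment:
  assumes x: "0 < x" and j: "2 \<le> j"
  shows "has_bochner_integral lborel (\<lambda>t. t ^ j * double_zeta_weight x t) (fact j * double_zeta (j + 1) x)"
proof -
  have "(\<lambda>k. (1 + real k) * (fact j / (x + real k) ^ (j + 1))) sums (fact j * double_zeta (j + 1) x)"
    using sums_mult[OF sums_double_zeta[OF x, of "j + 1"], of "fact j"] j by (simp add: mult_ac)
  then have "has_bochner_integral lborel (\<lambda>t. if 0 < t then t ^ j * double_zeta_weight x t else 0)
               (fact j * double_zeta (j + 1) x)"
    using x
    by (intro has_bochner_integral_laplace_series[where c = "\<lambda>k. 1 + real k" and a = "\<lambda>k. x + real k"]
        double_zeta_weight_sums) auto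
  moreover have "(\<lambda>t. if 0 < t then t ^ j * double_zeta_weight x t else 0) = (\<lambda>t. t ^ j * double_zeta_weight x t)"
    by (auto simp: double_zeta_weight_def)
  ultimately show ?thesis by simp
qed

lemma has_bochner_integral_double_zeta_logderiv_moment:
  assumes x: "0 < x" and j: "2 \<le> j"
  shows "has_bochner_integral lborel
           (\<lambda>t. t ^ (j + 1) * double_zeta_weight x t * double_zeta_logderiv x t)
           ((real j - 1) * fact j * double_zeta (j + 1) x)"
proof -
  define w where "w t = double_zeta_weight x t * (double_zeta_logderiv x t + 2 / t)" for t
  have terms: "(\<lambda>k. (1 + real k) * (x + real k) * (fact (j + 1) / (x + real k) ^ (j + 1 + 1))) =
        (\<lambda>k. fact (j + 1) * ((1 + real k) / (x + real k) ^ (j + 1)))"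
  proof
    fix k
    have "c * y * (F / y ^ (j + 1 + 1)) = F * (c / y ^ (j + 1))" if "y \<noteq> 0" for c y F :: real
      using that by (simp add: field_simps)
    moreover have "x + real k \<noteq> 0" using x by simp
    ultimately show "(1 + real k) * (x + real k) * (fact (j + 1) / (x + real k) ^ (j + 1 + 1)) =
               fact (j + 1) * ((1 + real k) / (x + real k) ^ (j + 1))"
      by blast
  qed
  have "(\<lambda>k. (1 + real k) * (x + real k) * (fact (j + 1) / (x + real k) ^ (j + 1 + 1))) sums
               (fact (j + 1) * double_zeta (j + 1) x)"
    unfolding terms using j by (intro sums_mult sums_double_zeta x) simp
  then have "has_bochner_integral lborel (\<lambda>t. if 0 < t then t ^ (j + 1) * w t else 0)
               (fact (j + 1) * double_zeta (j + 1) x)"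
    unfolding w_def using x
    by (intro has_bochner_integral_laplace_series[where c = "\<lambda>k. (1 + real k) * (x + real k)"
          and a = "\<lambda>k. x + real k"] double_zeta_weight_deriv_sums) auto
  from has_bochner_integral_diff[OF this has_bochner_integral_mult_right[OF
        has_bochner_integral_double_zeta_moment[OF x j], of 2]]
  have "has_bochner_integral lborel
          (\<lambda>t. (if 0 < t then t ^ (j + 1) * w t else 0) - 2 * (t ^ j * double_zeta_weight x t))
          (fact (j + 1) * double_zeta (j + 1) x - 2 * (fact j * double_zeta (j + 1) x))" .
  moreover have "(\<lambda>t. (if 0 < t then t ^ (j + 1) * w t else 0) - 2 * (t ^ j * double_zeta_weight x t)) =
                 (\<lambda>t. t ^ (j + 1) * double_zeta_weight x t * double_zeta_logderiv x t)"
    by (auto simp: fun_eq_iff w_def double_zeta_weight_def field_simps)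
  moreover have "fact (j + 1) * double_zeta (j + 1) x - 2 * (fact j * double_zeta (j + 1) x) =
                 (real j - 1) * fact j * double_zeta (j + 1) x"
    by (simp add: algebra_simps)
  ultimately show ?thesis by simp
qed

lemma double_zeta_logderiv_strict_mono:
  assumes s: "0 < s" and st: "s < t"
  shows "double_zeta_logderiv x s < double_zeta_logderiv x t"
proof (rule DERIV_pos_imp_increasing[OF st])
  fix v assume "s \<le> v" "v \<le> t"
  then have v: "0 < v" using s by linarith
  then have "v\<^sup>2 * exp v < (exp v - 1)\<^sup>2" by (rule sq_mult_exp_less_sq_exp_minus_1)
  then have "0 < 2 / v\<^sup>2 - 2 * exp v / (exp v - 1)\<^sup>2"
    using v by (simp add: field_simps)
  moreover have "DERIV (double_zeta_logderiv x) v :> 2 / v\<^sup>2 - 2 * exp v / (exp v - 1)\<^sup>2"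
    unfolding double_zeta_logderiv_def[abs_def] using v
    by (auto intro!: derivative_eq_intros simp: power2_eq_square field_simps)
  ultimately show "\<exists>y. DERIV (double_zeta_logderiv x) v :> y \<and> 0 < y" by blast
qed

lemma double_zeta_logderiv_diff_mult_pos:
  assumes "0 < t" "0 < s" "t \<noteq> s"
  shows "0 < (t - s) * (double_zeta_logderiv x t - double_zeta_logderiv x s)"
proof (cases t s rule: linorder_cases)
  case less
  then show ?thesis
    using double_zeta_logderiv_strict_mono[OF \<open>0 < t\<close> less] by (simp add: mult_neg_neg)
next
  case greater
  then show ?thesis
    using double_zeta_logderiv_strict_mono[OF \<open>0 < s\<close> greater] by simp
qed (use assms in simp)

lemma double_zeta_moment_chebyshev:
  assumes x: "0 < x" and m: "2 \<le> m"
  shows "(real m - 1) * (fact m * double_zeta (m + 1) x) * (fact (m + 2) * double_zeta (m + 3) x)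
           < real m * (fact (m + 1) * double_zeta (m + 2) x)\<^sup>2"
proof -
  define W where "W = double_zeta_weight x"
  define L where "L = double_zeta_logderiv x"
  define M where "M j = fact j * double_zeta (j + 1) x" for j
  have M_pos: "0 < M j" if "2 \<le> j" for j
    using that by (simp add: M_def double_zeta_pos x)
  define \<tau> where "\<tau> = M (m + 2) / M (m + 1)"
  have \<tau>: "0 < \<tau>" "\<tau> * M (m + 1) = M (m + 2)"
    using M_pos[of "m + 1"] M_pos[of "m + 2"] m by (simp_all add: \<tau>_def)
  have M1: "has_bochner_integral lborel (\<lambda>t. t ^ (m + 1) * W t) (M (m + 1))"
    using has_bochner_integral_double_zeta_moment[OF x, of "m + 1"] m by (simp add: W_def M_def)
  have M2: "has_bochner_integral lborel (\<lambda>t. t ^ (m + 2) * W t) (M (m + 2))"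
    using has_bochner_integral_double_zeta_moment[OF x, of "m + 2"] m by (simp add: W_def M_def)
  have D1: "has_bochner_integral lborel (\<lambda>t. t ^ (m + 1) * W t * L t) ((real m - 1) * M m)"
    using has_bochner_integral_double_zeta_logderiv_moment[OF x m] by (simp add: W_def L_def M_def mult.assoc)
  have D2: "has_bochner_integral lborel (\<lambda>t. t ^ (m + 2) * W t * L t) (real m * M (m + 1))"
    using has_bochner_integral_double_zeta_logderiv_moment[OF x, of "m + 1"] m
    by (simp add: W_def L_def M_def mult.assoc)
  have F: "has_bochner_integral lborel
      (\<lambda>t. t ^ (m + 2) * W t * L t - \<tau> * (t ^ (m + 1) * W t * L t)
            - L \<tau> * (t ^ (m + 2) * W t) + \<tau> * L \<tau> * (t ^ (m + 1) * W t))
      (real m * M (m + 1) - \<tau> * ((real m - 1) * M m) - L \<tau> * M (m + 2) + \<tau> * L \<tau> * M (m + 1))"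
    by (intro has_bochner_integral_add has_bochner_integral_diff has_bochner_integral_mult_right
        M1 M2 D1 D2)
  text \<open>Chebyshev's trick: the integrand is nonnegative because \<open>L\<close> is increasing, and \<open>\<tau>\<close>
    is chosen so that the terms with \<open>L \<tau>\<close> cancel in its integral.\<close>
  have integrand: "t ^ (m + 2) * W t * L t - \<tau> * (t ^ (m + 1) * W t * L t)
            - L \<tau> * (t ^ (m + 2) * W t) + \<tau> * L \<tau> * (t ^ (m + 1) * W t)
        = (t - \<tau>) * (L t - L \<tau>) * (t ^ (m + 1) * W t)" for t
    by (simp add: algebra_simps)
  have factor_pos: "0 < (t - \<tau>) * (L t - L \<tau>)" if "0 < t" "t \<noteq> \<tau>" for t
    unfolding L_def using that(1) \<tau>(1) that(2) by (rule double_zeta_logderiv_diff_mult_pos)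
  have W_pos: "0 < W t" if "0 < t" for t
    using that by (simp add: W_def double_zeta_weight_def)
  have "0 < real m * M (m + 1) - \<tau> * ((real m - 1) * M m) - L \<tau> * M (m + 2) + \<tau> * L \<tau> * M (m + 1)"
  proof (rule has_bochner_integral_lborel_pos[OF F, unfolded integrand])
    fix t :: real
    show "0 \<le> (t - \<tau>) * (L t - L \<tau>) * (t ^ (m + 1) * W t)"
      using factor_pos[of t] W_pos[of t]
      by (cases "0 < t"; cases "t = \<tau>") (auto simp: W_def double_zeta_weight_def)
    assume "0 < t" "t \<noteq> \<tau>"
    then show "0 < (t - \<tau>) * (L t - L \<tau>) * (t ^ (m + 1) * W t)"
      using factor_pos W_pos by simp
  qed
  moreover have "L \<tau> * M (m + 2) = \<tau> * L \<tau> * M (m + 1)"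
    using \<tau>(2) by simp
  ultimately have "0 < real m * M (m + 1) - \<tau> * ((real m - 1) * M m)"
    by linarith
  then have "0 < (real m * M (m + 1) - \<tau> * ((real m - 1) * M m)) * M (m + 1)"
    using M_pos[of "m + 1"] m by simp
  also have "\<dots> = real m * (M (m + 1))\<^sup>2 - (real m - 1) * M m * M (m + 2)"
    unfolding \<tau>(2)[symmetric] by (simp add: algebra_simps power2_eq_square)
  finally have "(real m - 1) * M m * M (m + 2) < real m * (M (m + 1))\<^sup>2"
    by simp
  then show ?thesis
    by (simp add: M_def eval_nat_numeral)
qed

lemma double_zeta_sq_gt:
  assumes x: "0 < x" and p: "3 \<le> p"
  shows "(real p - 2) * (real p + 1) * (double_zeta p x * double_zeta (p + 2) x)
           < (real p - 1) * real p * (double_zeta (p + 1) x)\<^sup>2"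
proof -
  define m where "m = p - 1"
  have p_eq: "p = m + 1" and m: "2 \<le> m"
    using p by (simp_all add: m_def)
  have fact_eq: "fact (m + 1) = (real m + 1) * fact m" "fact (m + 2) = (real m + 2) * ((real m + 1) * fact m)"
    by (simp_all add: eval_nat_numeral algebra_simps)
  have lhs: "(real m - 1) * (fact m * double_zeta (m + 1) x) * (fact (m + 2) * double_zeta (m + 3) x) =
        (real m + 1) * fact m * fact m *
          ((real m - 1) * (real m + 2) * (double_zeta (m + 1) x * double_zeta (m + 3) x))"
    and rhs: "real m * (fact (m + 1) * double_zeta (m + 2) x)\<^sup>2 =
        (real m + 1) * fact m * fact m * (real m * (real m + 1) * (double_zeta (m + 2) x)\<^sup>2)"
    unfolding fact_eq by (simp_all add: algebra_simps power2_eq_square)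
  have "(real m - 1) * (real m + 2) * (double_zeta (m + 1) x * double_zeta (m + 3) x)
          < real m * (real m + 1) * (double_zeta (m + 2) x)\<^sup>2"
    using double_zeta_moment_chebyshev[OF x m] unfolding lhs rhs by (simp add: mult_less_cancel_left_pos)
  then show ?thesis
    unfolding p_eq by (simp add: eval_nat_numeral algebra_simps)
qed

lemma double_zeta_moment_bounds:
  assumes x: "0 < x"
  shows "fact i / x ^ (i + 1) \<le> fact (i + 2) * double_zeta (i + 3) x"
    and "fact (i + 2) * double_zeta (i + 3) x
           \<le> fact i / x ^ (i + 1) + 2 * (fact (i + 1) / x ^ (i + 2)) + fact (i + 2) / x ^ (i + 3)"
proof -
  have M: "has_bochner_integral lborel (\<lambda>t. t ^ (i + 2) * double_zeta_weight x t)
             (fact (i + 2) * double_zeta (i + 3) x)"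
    using has_bochner_integral_double_zeta_moment[OF x, of "i + 2"] by (simp add: eval_nat_numeral)
  have G: "has_bochner_integral lborel (gamma_kernel x j) (fact j / x ^ (j + 1))" for j
    by (rule has_bochner_integral_gamma_kernel[OF x])
  have kernel: "t ^ (i + 2) * double_zeta_weight x t = gamma_kernel x i t * (t / (1 - exp (- t)))\<^sup>2"
    if "0 < t" for t
    using that by (simp add: gamma_kernel_def double_zeta_weight_def power_add power_divide power2_eq_square)
  show "fact i / x ^ (i + 1) \<le> fact (i + 2) * double_zeta (i + 3) x"
  proof (rule has_bochner_integral_mono[OF G M])
    fix t :: real
    show "gamma_kernel x i t \<le> t ^ (i + 2) * double_zeta_weight x t"
      using kernel[of t] sq_div_one_minus_exp_neg_bounds(1)[of t] gamma_kernel_nonneg[of x i t]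
      by (cases "0 < t") (auto simp: gamma_kernel_def double_zeta_weight_def intro: mult_left_le)
  qed
  have U: "has_bochner_integral lborel
          (\<lambda>t. gamma_kernel x i t + 2 * gamma_kernel x (i + 1) t + gamma_kernel x (i + 2) t)
          (fact i / x ^ (i + 1) + 2 * (fact (i + 1) / x ^ (i + 2)) + fact (i + 2) / x ^ (i + 3))"
    using has_bochner_integral_add[OF has_bochner_integral_add[OF G[of i]
          has_bochner_integral_mult_right[OF G[of "i + 1"], of 2]] G[of "i + 2"]]
    by (simp add: eval_nat_numeral)
  show "fact (i + 2) * double_zeta (i + 3) x
          \<le> fact i / x ^ (i + 1) + 2 * (fact (i + 1) / x ^ (i + 2)) + fact (i + 2) / x ^ (i + 3)"
  proof (rule has_bochner_integral_mono[OF M U])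
    fix t :: real
    show "t ^ (i + 2) * double_zeta_weight x t
            \<le> gamma_kernel x i t + 2 * gamma_kernel x (i + 1) t + gamma_kernel x (i + 2) t"
    proof (cases "0 < t")
      case True
      have "t ^ (i + 2) * double_zeta_weight x t = gamma_kernel x i t * (t / (1 - exp (- t)))\<^sup>2"
        by (rule kernel[OF True])
      also have "\<dots> \<le> gamma_kernel x i t * (1 + t)\<^sup>2"
        using sq_div_one_minus_exp_neg_bounds(2)[OF True] gamma_kernel_nonneg[of x i t]
        by (rule mult_left_mono)
      also have "\<dots> = gamma_kernel x i t + 2 * gamma_kernel x (i + 1) t + gamma_kernel x (i + 2) t"
        using True by (simp add: gamma_kernel_def power2_eq_square algebra_simps)
      finally show ?thesis .
    qed (simp add: gamma_kernel_def double_zeta_weight_def)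
  qed
qed

lemma double_zeta_scaled_bounds:
  assumes x: "0 < x"
  shows "fact i / fact (i + 2) \<le> x ^ (i + 1) * double_zeta (i + 3) x"
    and "x ^ (i + 1) * double_zeta (i + 3) x
           \<le> fact i / fact (i + 2) + 2 * fact (i + 1) / fact (i + 2) * inverse x + inverse x ^ 2"
proof -
  define K where "K = x ^ (i + 1) / fact (i + 2)"
  have K: "0 \<le> K" using x by (simp add: K_def)
  have scale: "x ^ (i + 1) * double_zeta (i + 3) x = K * (fact (i + 2) * double_zeta (i + 3) x)"
    by (simp add: K_def)
  have lower: "K * (fact i / x ^ (i + 1)) = fact i / fact (i + 2)"
    using x by (simp add: K_def)
  have upper: "K * (fact i / x ^ (i + 1) + 2 * (fact (i + 1) / x ^ (i + 2)) + fact (i + 2) / x ^ (i + 3))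
                 = fact i / fact (i + 2) + 2 * fact (i + 1) / fact (i + 2) * inverse x + inverse x ^ 2"
  proof -
    have expand: "y / F2 * (F0 / y + 2 * (F1 / (y * x)) + F2 / (y * x * x)) =
                    F0 / F2 + 2 * F1 / F2 * inverse x + inverse x ^ 2"
      if "y \<noteq> 0" "F2 \<noteq> 0" for y F0 F1 F2 :: real
      using that x by (simp add: field_simps power2_eq_square)
    have pow: "x ^ (i + 2) = x ^ (i + 1) * x" "x ^ (i + 3) = x ^ (i + 1) * x * x"
      by (simp_all add: eval_nat_numeral)
    show ?thesis
      unfolding K_def pow by (intro expand) (use x in simp_all)
  qed
  show "fact i / fact (i + 2) \<le> x ^ (i + 1) * double_zeta (i + 3) x"
    using mult_left_mono[OF double_zeta_moment_bounds(1)[OF x, of i] K] unfolding scale lower .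
  show "x ^ (i + 1) * double_zeta (i + 3) x
          \<le> fact i / fact (i + 2) + 2 * fact (i + 1) / fact (i + 2) * inverse x + inverse x ^ 2"
    using mult_left_mono[OF double_zeta_moment_bounds(2)[OF x, of i] K] unfolding scale upper .
qed

lemma double_zeta_at_top:
  assumes p: "3 \<le> p"
  shows "((\<lambda>x. x ^ (p - 2) * double_zeta p x) \<longlongrightarrow> 1 / ((real p - 1) * (real p - 2))) at_top"
proof -
  define i where "i = p - 3"
  have p_eq: "p = i + 3" using p by (simp add: i_def)
  define c :: real where "c = fact i / fact (i + 2)"
  define B :: real where "B = 2 * fact (i + 1) / fact (i + 2)"
  have bounds: "eventually (\<lambda>x. c \<le> x ^ (i + 1) * double_zeta (i + 3) x \<and>
      x ^ (i + 1) * double_zeta (i + 3) x \<le> c + B * inverse x + inverse x ^ 2) at_top"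
  proof (rule eventually_mono[OF eventually_gt_at_top[of 0]])
    fix x :: real assume "0 < x"
    then show "c \<le> x ^ (i + 1) * double_zeta (i + 3) x \<and>
        x ^ (i + 1) * double_zeta (i + 3) x \<le> c + B * inverse x + inverse x ^ 2"
      unfolding c_def B_def by (intro conjI double_zeta_scaled_bounds)
  qed
  have "((\<lambda>x. c + B * inverse x + inverse x ^ 2) \<longlongrightarrow> c + B * 0 + 0 ^ 2) at_top"
    by (intro tendsto_intros tendsto_inverse_0_at_top filterlim_ident)
  then have upper: "((\<lambda>x. c + B * inverse x + inverse x ^ 2) \<longlongrightarrow> c) at_top"
    by simp
  have "((\<lambda>x. x ^ (i + 1) * double_zeta (i + 3) x) \<longlongrightarrow> c) at_top"
    by (rule tendsto_sandwich[OF eventually_mono[OF bounds] eventually_mono[OF bounds]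
          tendsto_const upper]) simp_all
  moreover have "fact (i + 2) = ((real i + 2) * (real i + 1)) * (fact i :: real)"
    by (simp add: eval_nat_numeral algebra_simps)
  then have "c = 1 / ((real p - 1) * (real p - 2))"
    by (simp add: c_def p_eq)
  ultimately show ?thesis
    by (simp add: p_eq eval_nat_numeral)
qed

section \<open>The ratio of poly-double gamma functions\<close>

lemma psi2_eq_double_zeta: "psi2 n x = (-1) ^ (n + 1) * fact n * double_zeta (n + 1) x"
  by (simp add: psi2_def double_zeta_def)

lemma psi2_ratio_eq_double_zeta:
  assumes "1 \<le> n"
  shows "(psi2 n x)\<^sup>2 / (psi2 (n - 1) x * psi2 (n + 1) x) =
         real n / (real n + 1) * ((double_zeta (n + 1) x)\<^sup>2 / (double_zeta n x * double_zeta (n + 2) x))"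
proof -
  obtain m where n: "n = Suc m" using assms by (cases n) auto
  have split: "(a * u)\<^sup>2 / ((b * v) * (c * w)) = a\<^sup>2 / (b * c) * (u\<^sup>2 / (v * w))" for a b c u v w :: real
    by (simp add: power_mult_distrib times_divide_times_eq mult_ac)
  have "((-1) ^ (n + 1) * fact n)\<^sup>2 / (((-1) ^ n * fact (n - 1)) * ((-1) ^ (n + 2) * fact (n + 1)))
        = real n / (real n + 1 :: real)"
    by (simp add: n power2_eq_square divide_simps)
  then show ?thesis
    unfolding psi2_eq_double_zeta split by (simp add: n)
qed

lemma psi2_ratio_eq_scaled:
  assumes n: "1 \<le> n" and x: "0 < x" and abc: "2 * b = a + c"
  shows "(psi2 n x)\<^sup>2 / (psi2 (n - 1) x * psi2 (n + 1) x) = real n / (real n + 1) *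
           ((x ^ b * double_zeta (n + 1) x)\<^sup>2 / ((x ^ a * double_zeta n x) * (x ^ c * double_zeta (n + 2) x)))"
  unfolding psi2_ratio_eq_double_zeta[OF n] using x abc by (simp add: ratio_power_rescale)

lemma psi2_ratio_bounds:
  assumes n: "3 \<le> n" and x: "0 < x"
  shows "(real n - 2) / (real n - 1) < (psi2 n x)\<^sup>2 / (psi2 (n - 1) x * psi2 (n + 1) x)"
    and "(psi2 n x)\<^sup>2 / (psi2 (n - 1) x * psi2 (n + 1) x) < real n / (real n + 1)"
proof -
  have D: "0 < double_zeta n x * double_zeta (n + 2) x"
    using n x by (simp add: double_zeta_pos)
  have R: "(psi2 n x)\<^sup>2 / (psi2 (n - 1) x * psi2 (n + 1) x) =
           real n / (real n + 1) * ((double_zeta (n + 1) x)\<^sup>2 / (double_zeta n x * double_zeta (n + 2) x))"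
    using n by (intro psi2_ratio_eq_double_zeta) simp
  have n1: "0 < real n - 1" using n by simp
  have "(real n - 2) * (real n + 1) * (double_zeta n x * double_zeta (n + 2) x)
          < (real n - 1) * real n * (double_zeta (n + 1) x)\<^sup>2"
    by (rule double_zeta_sq_gt[OF x n])
  then have "(real n - 2) * (real n + 1) / ((real n - 1) * real n)
               < (double_zeta (n + 1) x)\<^sup>2 / (double_zeta n x * double_zeta (n + 2) x)"
    using D n1 n by (simp add: field_simps)
  then have "real n / (real n + 1) * ((real n - 2) * (real n + 1) / ((real n - 1) * real n))
               < (psi2 n x)\<^sup>2 / (psi2 (n - 1) x * psi2 (n + 1) x)"
    unfolding R using n by (intro mult_strict_left_mono) auto
  moreover have "real n / (real n + 1) * ((real n - 2) * (real n + 1) / ((real n - 1) * real n))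
                   = (real n - 2) / (real n - 1)"
    using n by (simp add: divide_simps)
  ultimately show "(real n - 2) / (real n - 1) < (psi2 n x)\<^sup>2 / (psi2 (n - 1) x * psi2 (n + 1) x)"
    by simp
  have "(double_zeta (n + 1) x)\<^sup>2 < double_zeta n x * double_zeta (n + 2) x"
    using n x by (intro double_zeta_sq_less) auto
  then have "(double_zeta (n + 1) x)\<^sup>2 / (double_zeta n x * double_zeta (n + 2) x) < 1"
    using D by simp
  then have "real n / (real n + 1) * ((double_zeta (n + 1) x)\<^sup>2 / (double_zeta n x * double_zeta (n + 2) x))
              < real n / (real n + 1) * 1"
    using n by (intro mult_strict_left_mono) auto
  then show "(psi2 n x)\<^sup>2 / (psi2 (n - 1) x * psi2 (n + 1) x) < real n / (real n + 1)"
    unfolding R by (simp only: mult_1_right)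
qed

lemma psi2_ratio_at_right_0:
  assumes n: "3 \<le> n"
  shows "((\<lambda>x. (psi2 n x)\<^sup>2 / (psi2 (n - 1) x * psi2 (n + 1) x)) \<longlongrightarrow> real n / (real n + 1))
           (at_right 0)"
proof -
  let ?y = "\<lambda>p x. x ^ p * double_zeta p x"
  have "eventually (\<lambda>x. (psi2 n x)\<^sup>2 / (psi2 (n - 1) x * psi2 (n + 1) x) =
          real n / (real n + 1) * ((?y (n + 1) x)\<^sup>2 / (?y n x * ?y (n + 2) x))) (at_right 0)"
    by (rule eventually_mono[OF eventually_at_right_less[of 0]], rule psi2_ratio_eq_scaled) (use n in auto)
  moreover have "((\<lambda>x. real n / (real n + 1) * ((?y (n + 1) x)\<^sup>2 / (?y n x * ?y (n + 2) x)))
                    \<longlongrightarrow> real n / (real n + 1) * (1\<^sup>2 / (1 * 1))) (at_right 0)"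
    using n by (intro tendsto_intros double_zeta_at_right_0) auto
  ultimately show ?thesis
    by (simp add: tendsto_cong)
qed

lemma psi2_ratio_at_top:
  assumes n: "3 \<le> n"
  shows "((\<lambda>x. (psi2 n x)\<^sup>2 / (psi2 (n - 1) x * psi2 (n + 1) x)) \<longlongrightarrow> (real n - 2) / (real n - 1))
           at_top"
proof -
  let ?y = "\<lambda>p x. x ^ (p - 2) * double_zeta p x"
  let ?l = "\<lambda>p. 1 / ((real p - 1) * (real p - 2))"
  have "eventually (\<lambda>x. (psi2 n x)\<^sup>2 / (psi2 (n - 1) x * psi2 (n + 1) x) =
          real n / (real n + 1) * ((?y (n + 1) x)\<^sup>2 / (?y n x * ?y (n + 2) x))) at_top"
    by (rule eventually_mono[OF eventually_gt_at_top[of 0]], rule psi2_ratio_eq_scaled) (use n in auto)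
  moreover have "((\<lambda>x. real n / (real n + 1) * ((?y (n + 1) x)\<^sup>2 / (?y n x * ?y (n + 2) x)))
                    \<longlongrightarrow> real n / (real n + 1) * ((?l (n + 1))\<^sup>2 / (?l n * ?l (n + 2)))) at_top"
    using n by (intro tendsto_intros double_zeta_at_top) auto
  moreover have "real n / (real n + 1) * ((?l (n + 1))\<^sup>2 / (?l n * ?l (n + 2))) = (real n - 2) / (real n - 1)"
  proof -
    define a where "a = real n - 2"
    have "0 < a" "real n = a + 2" using n by (simp_all add: a_def)
    then show ?thesis by (simp add: power2_eq_square add_pos_pos divide_simps)
  qed
  ultimately show ?thesis
    by (simp add: tendsto_cong)
qed

theorem corollary3p3:
  fixes n :: nat
  assumes "n \<ge> 3"
  shows "(\<forall>x>0. (real n - 2) / (real n - 1) < (psi2 n x)\<^sup>2 / (psi2 (n - 1) x * psi2 (n + 1) x)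
                 \<and> (psi2 n x)\<^sup>2 / (psi2 (n - 1) x * psi2 (n + 1) x) < real n / (real n + 1))
         \<and> (\<forall>c > (real n - 2) / (real n - 1). \<exists>x>0.
                 (psi2 n x)\<^sup>2 / (psi2 (n - 1) x * psi2 (n + 1) x) < c)
         \<and> (\<forall>c < real n / (real n + 1). \<exists>x>0.
                 c < (psi2 n x)\<^sup>2 / (psi2 (n - 1) x * psi2 (n + 1) x))"
proof -
  let ?R = "\<lambda>x. (psi2 n x)\<^sup>2 / (psi2 (n - 1) x * psi2 (n + 1) x)"
  have lower_sharp: "\<exists>x>0. ?R x < c" if "(real n - 2) / (real n - 1) < c" for c
  proof -
    have "eventually (\<lambda>x. 0 < x \<and> ?R x < c) at_top"
      using eventually_gt_at_top[of 0] order_tendstoD(2)[OF psi2_ratio_at_top[OF assms] that]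
      by (rule eventually_conj)
    from eventually_happens'[OF _ this] show ?thesis by simp
  qed
  have upper_sharp: "\<exists>x>0. c < ?R x" if "c < real n / (real n + 1)" for c
  proof -
    have "eventually (\<lambda>x. 0 < x \<and> c < ?R x) (at_right 0)"
      using eventually_at_right_less[of 0] order_tendstoD(1)[OF psi2_ratio_at_right_0[OF assms] that]
      by (rule eventually_conj)
    from eventually_happens'[OF _ this] show ?thesis by simp
  qed
  show ?thesis
    using psi2_ratio_bounds[OF assms] lower_sharp upper_sharp by (intro conjI allI impI) simp_all
qed

end
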